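(* Let $D=\{(x,z):\ -1<z<0,\ -1<x<z+1\}$, and for $\lambda\in(\tfrac12,\tfrac45)$ let $a=\sqrt{\lambda/(1-\lambda)}$, $P(\lambda)=\{(x,z):\ a-3+\tfrac1a<z-\tfrac{x}{a}<1-a+\tfrac1a,\ 1-a-\tfrac1a<z+\tfrac{x}{a}<a-1-\tfrac1a\}$, $S(\lambda)=\partial P(\lambda)$, and $\chi(x,z,\lambda)$ the indicator of $P(\lambda)$ in $D$. Let $\tfrac12<\lambda_*<\lambda_{**}<\tfrac45$, $\sigma_0\in C^1[\tfrac12,\tfrac45]$, $$\psi(x,z,t)=\int_{\lambda_*}^{\lambda_{**}}\cos(\sqrt\lambda\,t)\,\sigma_0(\lambda)\chi(x,z,\lambda)\,d\lambda,$$ and define $\mathbf U=(u,v,w)$ by $u=-\psi_z$, $v(x,z,t)=\int_0^t\psi_z(x,z,s)\,ds$, $w=\psi_x$. Then $\mathbf U(x,z,t)=\mathbf 0$ for all $t$ and all $(x,z)$ in the open set $D\setminus\bigcup_{\mu\in[\lambda_*,\lambda_{**}]}S(\mu)$ (i.e. in each of the subdomains $D_9,\dots,D_{13}$).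
   Context: The boundaries $S(\lambda_* )$ and $S(\lambda_{**})$ divide $D$ into subdomains $D_1,\dots,D_{13}$; the subdomains $D_9,\dots,D_{13}$ are the connected components of $D\setminus\bigcup_{\mu\in[\lambda_*,\lambda_{**}]}S(\mu)$: $D_9$ is the inner region (contained in every $P(\mu)$), and $D_{10},\dots,D_{13}$ are the regions outside every $P(\mu)$, $\mu\in[\lambda_*,\lambda_{**}]$. $\mathbf U$ is the velocity field of the inertial wave (solution of the linearized rotating-fluid system $u_t=v-p_x$, $v_t=-u$, $w_t=-p_z$, $u_x+w_z=0$, $un_1+wn_3=0$ on $\partial D$) associated with the stream function $\psi$. *)

theory Defs
  imports "HOL-Analysis.Analysis"
begin

definition dom_D :: "(real \<times> real) set" where
  "dom_D = {(x, z). -1 < z \<and> z < 0 \<and> -1 < x \<and> x < z + 1}"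

definition a_of :: "real \<Rightarrow> real" where
  "a_of l = sqrt (l / (1 - l))"

definition P_set :: "real \<Rightarrow> (real \<times> real) set" where
  "P_set l = (let a = a_of l in
     {(x, z). a - 3 + 1/a < z - x/a \<and> z - x/a < 1 - a + 1/a \<and>
              1 - a - 1/a < z + x/a \<and> z + x/a < a - 1 - 1/a})"

definition S_set :: "real \<Rightarrow> (real \<times> real) set" where
  "S_set l = frontier (P_set l)"

text \<open>Indicator of P(lambda) (only evaluated on D).\<close>
definition chi :: "real \<Rightarrow> real \<Rightarrow> real \<Rightarrow> real" where
  "chi x z l = indicator (P_set l) (x, z)"

definition psi :: "real \<Rightarrow> real \<Rightarrow> (real \<Rightarrow> real) \<Rightarrow> real \<Rightarrow> real \<Rightarrow> real \<Rightarrow> real" where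
  "psi ls lss \<sigma>0 x z t = integral {ls..lss} (\<lambda>l. cos (sqrt l * t) * \<sigma>0 l * chi x z l)"

definition psi_z :: "real \<Rightarrow> real \<Rightarrow> (real \<Rightarrow> real) \<Rightarrow> real \<Rightarrow> real \<Rightarrow> real \<Rightarrow> real" where
  "psi_z ls lss \<sigma>0 x z t = deriv (\<lambda>z'. psi ls lss \<sigma>0 x z' t) z"

definition psi_x :: "real \<Rightarrow> real \<Rightarrow> (real \<Rightarrow> real) \<Rightarrow> real \<Rightarrow> real \<Rightarrow> real \<Rightarrow> real" where
  "psi_x ls lss \<sigma>0 x z t = deriv (\<lambda>x'. psi ls lss \<sigma>0 x' z t) x"

text \<open>Velocity field U = (u, v, w); v uses the oriented integral from 0 to t.\<close>
definition U_field :: "real \<Rightarrow> real \<Rightarrow> (real \<Rightarrow> real) \<Rightarrow> real \<Rightarrow> real \<Rightarrow> real \<Rightarrow> real \<times> real \<times> real" where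
  "U_field ls lss \<sigma>0 x z t =
     (- psi_z ls lss \<sigma>0 x z t,
      (LBINT s=0..t. psi_z ls lss \<sigma>0 x z s),
      psi_x ls lss \<sigma>0 x z t)"

end

theory Submission
  imports Defs
begin

text \<open>A point off every boundary S(\<mu>), \<mu> \<in> [ls, lss], lies for each such \<mu> either in the open
  polygon P(\<mu>) or outside its closure, i.e. it satisfies all four defining inequalities strictly or
  violates one strictly. Since the sides depend continuously on \<mu>, membership in P(\<mu>) is then
  constant near (\<mu>, (x, z)), and by compactness of [ls, lss] on one neighbourhood of (x, z)
  uniformly in \<mu>. So \<chi>, hence \<psi>, is locally constant in (x, z), and all its partial derivatives,
  hence u, v and w, vanish there.\<close>

lemma closure_Inter_halfspace_lt:
  fixes c :: "'i \<Rightarrow> 'n::euclidean_space"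
  assumes "\<And>i. i \<in> I \<Longrightarrow> c i \<noteq> 0" and "\<exists>x. \<forall>i\<in>I. c i \<bullet> x < b i"
  shows "closure {x. \<forall>i\<in>I. c i \<bullet> x < b i} = {x. \<forall>i\<in>I. c i \<bullet> x \<le> b i}"
proof -
  have eq: "{x. \<forall>i\<in>I. c i \<bullet> x < b i} = \<Inter>((\<lambda>i. {x. c i \<bullet> x < b i}) ` I)" by blast
  have "closure (\<Inter>((\<lambda>i. {x. c i \<bullet> x < b i}) ` I)) = \<Inter>((\<lambda>i. closure {x. c i \<bullet> x < b i}) ` I)"
    using assms(2) by (subst closure_Inter_convex_open) (auto simp: convex_halfspace_lt open_halfspace_lt)
  then show ?thesis using assms(1) unfolding eq by auto
qed

lemma eventually_nhds_uniform_on_compact: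
  fixes K :: "'a::topological_space set" and p :: "'b::topological_space"
  assumes "compact K" and "\<And>\<mu>. \<mu> \<in> K \<Longrightarrow> \<forall>\<^sub>F y in nhds (\<mu>, p). Q (fst y) (snd y)"
  shows "\<forall>\<^sub>F q in nhds p. \<forall>\<mu>\<in>K. Q \<mu> q"
proof -
  have "\<exists>U R. open U \<and> \<mu> \<in> U \<and> eventually R (nhds p) \<and> (\<forall>m\<in>U. \<forall>q. R q \<longrightarrow> Q m q)"
    if \<mu>K: "\<mu> \<in> K" for \<mu>
  proof -
    obtain Pf R where "eventually Pf (nhds \<mu>)" "eventually R (nhds p)" "\<And>m q. Pf m \<Longrightarrow> R q \<Longrightarrow> Q m q"
      using assms(2)[OF \<mu>K] unfolding nhds_prod eventually_prod_filter by auto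
    then show ?thesis unfolding eventually_nhds by metis
  qed
  then obtain U R where UR: "\<And>\<mu>. \<mu> \<in> K \<Longrightarrow> open (U \<mu>) \<and> \<mu> \<in> U \<mu> \<and> eventually (R \<mu>) (nhds p) \<and>
      (\<forall>m\<in>U \<mu>. \<forall>q. R \<mu> q \<longrightarrow> Q m q)"
    by metis
  obtain F where F: "F \<subseteq> K" "finite F" "K \<subseteq> (\<Union>\<mu>\<in>F. U \<mu>)"
    using compactE_image[OF assms(1), of K U] UR by blast
  have "\<forall>\<^sub>F q in nhds p. \<forall>\<mu>\<in>F. R \<mu> q"
    using F UR by (simp add: eventually_ball_finite_distrib subset_iff)
  then show ?thesis
    by eventually_elim (use F UR in blast)
qed

lemma eventually_strict_system_stable:
  fixes g :: "'i \<Rightarrow> 'a::t2_space \<times> 'b::t2_space \<Rightarrow> real"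
  assumes "finite I" and cont: "\<And>i. i \<in> I \<Longrightarrow> isCont (g i) (\<mu>, p)"
    and "(\<forall>i\<in>I. g i (\<mu>, p) > 0) \<or> (\<exists>i\<in>I. g i (\<mu>, p) < 0)"
  shows "\<forall>\<^sub>F y in nhds (\<mu>, p). (\<forall>i\<in>I. g i y > 0) \<longleftrightarrow> (\<forall>i\<in>I. g i (fst y, p) > 0)"
proof -
  have lim: "(g i \<longlongrightarrow> g i (\<mu>, p)) (nhds (\<mu>, p))"
    "((\<lambda>y. g i (fst y, p)) \<longlongrightarrow> g i (\<mu>, p)) (nhds (\<mu>, p))" if "i \<in> I" for i
  proof -
    have "g i \<midarrow>(\<mu>, p)\<rightarrow> g i (\<mu>, p)"
      using cont[OF that] by (simp add: isCont_def)
    moreover have "((\<lambda>y. (fst y, p)) \<longlongrightarrow> (\<mu>, p)) (nhds (\<mu>, p))"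
      using tendsto_fst[OF filterlim_ident, of "(\<mu>, p)"] by (auto intro!: tendsto_intros)
    ultimately show "(g i \<longlongrightarrow> g i (\<mu>, p)) (nhds (\<mu>, p))"
      "((\<lambda>y. g i (fst y, p)) \<longlongrightarrow> g i (\<mu>, p)) (nhds (\<mu>, p))"
      by (auto simp: tendsto_at_iff_tendsto_nhds intro: tendsto_compose)
  qed
  show ?thesis
    using assms(3)
  proof (elim disjE bexE)
    assume "\<forall>i\<in>I. g i (\<mu>, p) > 0"
    then have "\<forall>\<^sub>F y in nhds (\<mu>, p). \<forall>i\<in>I. g i y > 0 \<and> g i (fst y, p) > 0"
      using lim \<open>finite I\<close> by (auto intro!: eventually_ball_finite eventually_conj order_tendstoD(1))
    then show ?thesis by eventually_elim auto
  next
    fix i assume "i \<in> I" "g i (\<mu>, p) < 0"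
    then have "\<forall>\<^sub>F y in nhds (\<mu>, p). g i y < 0 \<and> g i (fst y, p) < 0"
      using lim by (auto intro!: eventually_conj order_tendstoD(2))
    then show ?thesis by eventually_elim (use \<open>i \<in> I\<close> in force)
  qed
qed

lemma deriv_partial_eq_0_if_locally_constant:
  fixes f :: "real \<Rightarrow> real \<Rightarrow> real"
  assumes "\<forall>\<^sub>F q in nhds (x, z). f (fst q) (snd q) = f x z"
  shows "deriv (\<lambda>x'. f x' z) x = 0" and "deriv (\<lambda>z'. f x z') z = 0"
proof -
  have "((\<lambda>x'. (x', z)) \<longlongrightarrow> (x, z)) (nhds x)" "((\<lambda>z'. (x, z')) \<longlongrightarrow> (x, z)) (nhds z)"
    by (auto intro!: tendsto_intros filterlim_ident)
  then have "\<forall>\<^sub>F x' in nhds x. f x' z = f x z" "\<forall>\<^sub>F z' in nhds z. f x z' = f x z"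
    by (auto dest: eventually_compose_filterlim[OF assms])
  then show "deriv (\<lambda>x'. f x' z) x = 0" and "deriv (\<lambda>z'. f x z') z = 0"
    by (auto simp: deriv_cong_ev[where g = "\<lambda>_. f x z"])
qed

definition P_normal :: "real \<Rightarrow> nat \<Rightarrow> real \<times> real" where
  "P_normal a i = [(1/a, -1), (-1/a, 1), (-1/a, -1), (1/a, 1)] ! i"

definition P_offset :: "real \<Rightarrow> nat \<Rightarrow> real" where
  "P_offset a i = [3 - a - 1/a, 1 - a + 1/a, a - 1 + 1/a, a - 1 - 1/a] ! i"

lemma all_less_4_nat: "(\<forall>i<4::nat. Q i) \<longleftrightarrow> Q 0 \<and> Q 1 \<and> Q 2 \<and> Q 3"
  by (auto simp: numeral_eq_Suc less_Suc_eq)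

lemma P_set_halfplanes: "P_set l = {p. \<forall>i<4. P_normal (a_of l) i \<bullet> p < P_offset (a_of l) i}"
  by (auto simp: P_set_def Let_def all_less_4_nat P_normal_def P_offset_def algebra_simps)

lemma a_of_bounds:
  assumes "1/2 < l" "l < 4/5" shows "1 < a_of l" "a_of l < 2"
proof -
  have "1 < l / (1 - l)" "l / (1 - l) < 2\<^sup>2" using assms by (simp_all add: field_simps)
  then show "1 < a_of l" "a_of l < 2"
    unfolding a_of_def by (simp_all add: real_less_rsqrt real_less_lsqrt)
qed

lemma isCont_a_of [continuous_intros]: "isCont f y \<Longrightarrow> f y \<noteq> 1 \<Longrightarrow> isCont (\<lambda>y. a_of (f y)) y"
  unfolding a_of_def by (auto intro!: continuous_intros)

lemma closure_P_set:
  assumes "1/2 < l" "l < 4/5"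
  shows "closure (P_set l) = {p. \<forall>i<4. P_normal (a_of l) i \<bullet> p \<le> P_offset (a_of l) i}"
proof -
  define a where "a = a_of l"
  have "1 < a" "a < 2" using a_of_bounds[OF assms] by (simp_all add: a_def)
  then have "\<forall>i<4. P_normal a i \<bullet> ((a - 2) / 2, - 1 / 2) < P_offset a i"
    by (simp add: all_less_4_nat P_normal_def P_offset_def field_simps)
  moreover have "\<forall>i<4. P_normal a i \<noteq> 0"
    by (simp add: all_less_4_nat P_normal_def zero_prod_def)
  ultimately have "closure {p. \<forall>i\<in>{..<4}. P_normal a i \<bullet> p < P_offset a i} =
      {p. \<forall>i\<in>{..<4}. P_normal a i \<bullet> p \<le> P_offset a i}"
    by (intro closure_Inter_halfspace_lt) auto
  then show ?thesis
    unfolding P_set_halfplanes a_def[symmetric] by (simp add: Ball_def)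
qed

lemma P_set_membership_locally_stable:
  assumes "1/2 < \<mu>" "\<mu> < 4/5" and "p \<notin> S_set \<mu>"
  shows "\<forall>\<^sub>F y in nhds (\<mu>, p). snd y \<in> P_set (fst y) \<longleftrightarrow> p \<in> P_set (fst y)"
proof -
  define g where "g i = (\<lambda>y. P_offset (a_of (fst y)) i - P_normal (a_of (fst y)) i \<bullet> snd y)" for i
  have mem: "q \<in> P_set m \<longleftrightarrow> (\<forall>i\<in>{..<4}. g i (m, q) > 0)" for m q
    by (simp add: P_set_halfplanes g_def Ball_def)
  have "a_of \<mu> \<noteq> 0" "\<mu> \<noteq> 1" using a_of_bounds[OF assms(1,2)] assms(2) by auto
  then have "\<forall>i<4. isCont (g i) (\<mu>, p)"
    by (simp add: all_less_4_nat g_def P_normal_def P_offset_def) (auto intro!: continuous_intros)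
  moreover have "(\<forall>i\<in>{..<4}. g i (\<mu>, p) > 0) \<or> (\<exists>i\<in>{..<4}. g i (\<mu>, p) < 0)"
  proof (cases "p \<in> P_set \<mu>")
    case False
    then have "p \<notin> closure (P_set \<mu>)"
      using assms(3) interior_subset[of "P_set \<mu>"] by (auto simp: S_set_def frontier_def)
    then show ?thesis by (force simp: closure_P_set[OF assms(1,2)] g_def not_le)
  qed (simp add: mem)
  ultimately have "\<forall>\<^sub>F y in nhds (\<mu>, p). (\<forall>i\<in>{..<4}. g i y > 0) \<longleftrightarrow> (\<forall>i\<in>{..<4}. g i (fst y, p) > 0)"
    by (intro eventually_strict_system_stable) auto
  then show ?thesis by eventually_elim (simp add: mem)
qed

lemma psi_locally_constant:
  assumes "1/2 < ls" "lss < 4/5" and "\<forall>\<mu>\<in>{ls..lss}. (x, z) \<notin> S_set \<mu>"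
  shows "\<forall>\<^sub>F q in nhds (x, z). psi ls lss \<sigma>0 (fst q) (snd q) t = psi ls lss \<sigma>0 x z t"
proof -
  have "\<forall>\<^sub>F q in nhds (x, z). \<forall>\<mu>\<in>{ls..lss}. q \<in> P_set \<mu> \<longleftrightarrow> (x, z) \<in> P_set \<mu>"
    using assms by (intro eventually_nhds_uniform_on_compact P_set_membership_locally_stable) auto
  then show ?thesis
    by eventually_elim (auto simp: psi_def chi_def indicator_def intro!: integral_cong)
qed

theorem theorem3p1:
  fixes ls lss :: real and \<sigma>0 :: "real \<Rightarrow> real"
  assumes "1/2 < ls" and "ls < lss" and "lss < 4/5"
    and "\<sigma>0 C1_differentiable_on {1/2..4/5}"
  shows "\<forall>t x z. (x, z) \<in> dom_D - (\<Union>\<mu>\<in>{ls..lss}. S_set \<mu>) \<longrightarrow>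
           U_field ls lss \<sigma>0 x z t = (0, 0, 0)"
proof (intro allI impI)
  fix t x z assume "(x, z) \<in> dom_D - (\<Union>\<mu>\<in>{ls..lss}. S_set \<mu>)"
  then have "\<forall>\<mu>\<in>{ls..lss}. (x, z) \<notin> S_set \<mu>" by blast
  note psi_const = psi_locally_constant[OF assms(1,3) this, of \<sigma>0]
  have "psi_z ls lss \<sigma>0 x z = (\<lambda>s. 0)"
    using deriv_partial_eq_0_if_locally_constant(2)[OF psi_const] by (simp add: psi_z_def fun_eq_iff)
  moreover have "psi_x ls lss \<sigma>0 x z t = 0"
    using deriv_partial_eq_0_if_locally_constant(1)[OF psi_const] by (simp add: psi_x_def)
  ultimately show "U_field ls lss \<sigma>0 x z t = (0, 0, 0)"
    by (simp add: U_field_def interval_lebesgue_integral_def set_lebesgue_integral_def)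
qed

end
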